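(* Let $c>1$, let $m=m_1\cdots m_c\in S_c$, and let $K$ be the set partition of $S_c$ whose only part with more than one element is the set of cyclic shifts $\{m_am_{a+1}\cdots m_cm_1\cdots m_{a-1}:1\le a\le c\}$. Let $p=1\rightharpoonup m$ and $q=2\rightharpoonup m$, both in $S_{c+1}$. Then every non-avoider in $S_{c+1}$ is $K$-equivalent to $p$ or to $q$.
   Context: Permutations are written in one-line notation as words. For a word $w$ and positive integer $i$, $i\rightharpoonup w$ is the word obtained by increasing by $1$ each letter of $w$ that is $\ge i$ and then prepending $i$. The order permutation (standardization) of a word $u$ of distinct positive integers of length $\ell$ is the unique $\pi\in S_\ell$ with $\pi_i<\pi_j$ iff $u_i<u_j$. The $K$-equivalence on $S_n$ is generated by declaring $\phi\equiv\psi$ whenever $\phi=aub$, $\psi=avb$ for words $a,b,u,v$ with $u,v$ of length $c$ whose order permutations lie in the same part of $K$. A hit is a contiguous subword of length $c$ whose order permutation is a cyclic shift of $m$; a non-avoider is a permutation containing a hit. *)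

theory Defs
  imports Main
begin

definition perms :: "nat \<Rightarrow> nat list set" where
  "perms n = {w. length w = n \<and> distinct w \<and> set w = {1..n}}"

text \<open>The operation i \<rightharpoonup> w.\<close>
definition ins :: "nat \<Rightarrow> nat list \<Rightarrow> nat list" where
  "ins i w = i # map (\<lambda>x. if x \<ge> i then x + 1 else x) w"

definition std :: "nat list \<Rightarrow> nat list" where
  "std u = (THE p. p \<in> perms (length u) \<and>
      (\<forall>i < length u. \<forall>j < length u. p ! i < p ! j \<longleftrightarrow> u ! i < u ! j))"

definition shifts :: "nat list \<Rightarrow> nat list set" where
  "shifts m = {rotate k m | k. k < length m}"

definition Kpart :: "nat \<Rightarrow> nat list \<Rightarrow> nat list set set" where
  "Kpart c m = insert (shifts m) ((\<lambda>s. {s}) ` (perms c - shifts m))"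

definition Kstep :: "nat \<Rightarrow> nat list set set \<Rightarrow> nat list \<Rightarrow> nat list \<Rightarrow> bool" where
  "Kstep c K \<phi> \<psi> \<longleftrightarrow> (\<exists>a b u v. \<phi> = a @ u @ b \<and> \<psi> = a @ v @ b \<and>
      length u = c \<and> length v = c \<and> (\<exists>B\<in>K. std u \<in> B \<and> std v \<in> B))"

definition Kequiv :: "nat \<Rightarrow> nat list set set \<Rightarrow> nat \<Rightarrow> nat list \<Rightarrow> nat list \<Rightarrow> bool" where
  "Kequiv c K n \<phi> \<psi> \<longleftrightarrow> \<phi> \<in> perms n \<and> \<psi> \<in> perms n \<and>
      (\<lambda>x y. x \<in> perms n \<and> y \<in> perms n \<and> (Kstep c K x y \<or> Kstep c K y x))\<^sup>*\<^sup>* \<phi> \<psi>"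

definition nonavoider :: "nat list \<Rightarrow> nat list \<Rightarrow> bool" where
  "nonavoider m w \<longleftrightarrow> (\<exists>a u b. w = a @ u @ b \<and> length u = length m \<and> std u \<in> shifts m)"

end

theory Submission
  imports Defs
begin

text \<open>Two windows of length c whose standardizations are cyclic shifts of m can be exchanged.
Hence a non-avoider is equivalent either to x \<rightharpoonup> m or to ins_last y m, the word m relabelled around y
followed by y. If e t is the cyclic shift of m starting with e, then x \<rightharpoonup> (t e) and ins_last y (e t)
are the same word whenever {x, y} = {e, e + 1}; as t e and e t are both cyclic shifts of m, this
makes x \<rightharpoonup> m equivalent to ins_last y m. Taking e = x - 1 and e = x - 2 links x \<rightharpoonup> m with
(x - 2) \<rightharpoonup> m, so by parity everything is equivalent to 1 \<rightharpoonup> m or to 2 \<rightharpoonup> m.\<close>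

definition bump :: "nat \<Rightarrow> nat \<Rightarrow> nat" where
  "bump i x = (if i \<le> x then x + 1 else x)"

definition ins_last :: "nat \<Rightarrow> nat list \<Rightarrow> nat list" where
  "ins_last i w = map (bump i) w @ [i]"

lemma strict_mono_bump: "strict_mono (bump i)"
  by (auto simp: strict_mono_def bump_def)

lemma ins_eq: "ins i w = i # map (bump i) w"
  by (simp add: ins_def bump_def)

lemma ins_last_eq_rotate1: "ins_last i w = rotate1 (ins i w)"
  by (simp add: ins_last_def ins_eq)

lemma card_less_in_perms:
  assumes "p \<in> perms n" "i < n"
  shows "card {j. j < n \<and> p ! j < p ! i} = p ! i - 1"
proof -
  have len: "length p = n" and dist: "distinct p" and set_p: "set p = {1..n}"
    using assms(1) by (auto simp: perms_def)
  have "p ! i \<le> n"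
    using set_p len assms(2) nth_mem by fastforce
  have "inj_on ((!) p) {j. j < n \<and> p ! j < p ! i}"
    using dist len by (auto simp: inj_on_def nth_eq_iff_index_eq)
  then have "card {j. j < n \<and> p ! j < p ! i} = card ((!) p ` {j. j < n \<and> p ! j < p ! i})"
    by (rule card_image[symmetric])
  also have "(!) p ` {j. j < n \<and> p ! j < p ! i} = {v \<in> set p. v < p ! i}"
    using len by (auto simp: in_set_conv_nth)
  also have "\<dots> = {1..<p ! i}"
    using set_p \<open>p ! i \<le> n\<close> by auto
  finally show ?thesis
    by simp
qed

lemma perms_eqI:
  assumes "p \<in> perms n" "u \<in> perms n"
    and "\<forall>i<n. \<forall>j<n. p ! i < p ! j \<longleftrightarrow> u ! i < u ! j"
  shows "p = u"
proof (rule nth_equalityI)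
  show "length p = length u"
    using assms by (simp add: perms_def)
next
  fix i assume "i < length p"
  then have i: "i < n"
    using assms by (simp add: perms_def)
  have "{j. j < n \<and> p ! j < p ! i} = {j. j < n \<and> u ! j < u ! i}"
    using assms(3) i by auto
  then have "p ! i - 1 = u ! i - 1"
    using card_less_in_perms[OF assms(1) i] card_less_in_perms[OF assms(2) i] by simp
  moreover have "p ! i \<ge> 1" "u ! i \<ge> 1"
    using assms(1,2) i nth_mem by (fastforce simp: perms_def)+
  ultimately show "p ! i = u ! i"
    by simp
qed

lemma std_map_strict_mono:
  assumes "strict_mono f" "u \<in> perms (length u)"
  shows "std (map f u) = u"
  unfolding std_def
proof (rule the_equality)
  fix p assume "p \<in> perms (length (map f u)) \<and>
    (\<forall>i<length (map f u). \<forall>j<length (map f u). p ! i < p ! j \<longleftrightarrow> map f u ! i < map f u ! j)"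
  then show "p = u"
    using perms_eqI[of p "length u" u] assms by (simp add: strict_mono_less)
qed (use assms in \<open>simp add: strict_mono_less\<close>)

lemma rotate_in_perms: "w \<in> perms n \<Longrightarrow> rotate k w \<in> perms n"
  by (simp add: perms_def)

lemma ins_in_perms:
  assumes "m \<in> perms c" "1 \<le> x" "x \<le> c + 1"
  shows "ins x m \<in> perms (c + 1)"
proof -
  have "insert x (bump x ` {1..c}) = {1..c + 1}"
  proof (rule set_eqI)
    fix z
    have "z \<in> bump x ` {1..c}" if "z \<noteq> x" "z \<in> {1..c + 1}"
    proof (cases "z < x")
      case True
      then show ?thesis
        using that assms(3) by (intro image_eqI[where x = z]) (auto simp: bump_def)
    next
      case False
      then show ?thesis
        using that assms(2) by (intro image_eqI[where x = "z - 1"]) (auto simp: bump_def)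
    qed
    then show "z \<in> insert x (bump x ` {1..c}) \<longleftrightarrow> z \<in> {1..c + 1}"
      using assms(2,3) by (auto simp: bump_def)
  qed
  moreover have "x \<notin> bump x ` set m"
    by (auto simp: bump_def)
  ultimately show ?thesis
    using assms(1) strict_mono_imp_inj_on[OF strict_mono_bump]
    by (auto simp: ins_eq perms_def distinct_map)
qed

lemma ins_last_in_perms:
  assumes "m \<in> perms c" "1 \<le> x" "x \<le> c + 1"
  shows "ins_last x m \<in> perms (c + 1)"
  using ins_in_perms[OF assms] unfolding ins_last_eq_rotate1 perms_def by simp

lemma rotate_in_shifts: "m \<noteq> [] \<Longrightarrow> rotate k m \<in> shifts m"
  unfolding shifts_def
  by (rule CollectI, rule exI[of _ "k mod length m"]) (simp add: rotate_conv_mod[symmetric])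

lemma shifts_subset_perms: "m \<in> perms c \<Longrightarrow> shifts m \<subseteq> perms c"
  unfolding shifts_def using rotate_in_perms by blast

lemma Kequiv_refl: "x \<in> perms n \<Longrightarrow> Kequiv c K n x x"
  by (simp add: Kequiv_def)

lemma Kequiv_sym:
  assumes "Kequiv c K n x y"
  shows "Kequiv c K n y x"
proof -
  let ?R = "\<lambda>x y. x \<in> perms n \<and> y \<in> perms n \<and> (Kstep c K x y \<or> Kstep c K y x)"
  have "symp ?R"
    by (auto intro: sympI)
  moreover have "?R\<^sup>*\<^sup>* x y"
    using assms by (simp add: Kequiv_def)
  ultimately have "?R\<^sup>*\<^sup>* y x"
    by (rule sympD[OF symp_rtranclp])
  then show ?thesis
    using assms by (simp add: Kequiv_def)
qed

lemma Kequiv_trans [trans]: "Kequiv c K n x y \<Longrightarrow> Kequiv c K n y z \<Longrightarrow> Kequiv c K n x z"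
  unfolding Kequiv_def by (meson rtranclp_trans)

lemma Kequiv_replace_window:
  assumes "x \<in> perms n" "y \<in> perms n" "x = a @ u @ b" "y = a @ v @ b"
    and "length u = c" "length v = c" "std u \<in> shifts m" "std v \<in> shifts m"
  shows "Kequiv c (Kpart c m) n x y"
proof -
  have "shifts m \<in> Kpart c m"
    by (simp add: Kpart_def)
  then have "Kstep c (Kpart c m) x y"
    unfolding Kstep_def using assms by blast
  then show ?thesis
    unfolding Kequiv_def using assms(1,2) by blast
qed

lemma ins_snoc_eq_ins_last:
  assumes "e \<notin> set t" "{x, y} = {e, e + 1}" "x \<noteq> y"
  shows "ins x (t @ [e]) = ins_last y (e # t)"
proof -
  have "bump x z = bump y z" if "z \<in> set t" for z
    using assms that by (cases "z = e") (auto simp: bump_def doubleton_eq_iff)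
  then have "map (bump x) t = map (bump y) t"
    by simp
  moreover have "bump x e = y" "bump y e = x"
    using assms by (auto simp: bump_def doubleton_eq_iff)
  ultimately show ?thesis
    by (simp add: ins_eq ins_last_def)
qed

locale pattern_perm =
  fixes c :: nat and m :: "nat list"
  assumes c_pos: "0 < c" and m_perm: "m \<in> perms c"
begin

abbreviation K_equivalent :: "nat list \<Rightarrow> nat list \<Rightarrow> bool" (infix "\<approx>" 50) where
  "x \<approx> y \<equiv> Kequiv c (Kpart c m) (c + 1) x y"

lemma length_m: "length m = c"
  using m_perm by (simp add: perms_def)

lemma rotate_m_in_shifts: "rotate k m \<in> shifts m"
  using rotate_in_shifts c_pos length_m by auto

lemma m_in_shifts: "m \<in> shifts m"
  using rotate_m_in_shifts[of 0] by simp

lemma std_map_bump_shift: "s \<in> shifts m \<Longrightarrow> std (map (bump x) s) = s"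
  using std_map_strict_mono[OF strict_mono_bump] shifts_subset_perms[OF m_perm]
  by (auto simp: perms_def)

lemma ins_shift_Kequiv:
  assumes "s \<in> shifts m" "1 \<le> x" "x \<le> c + 1"
  shows "ins x s \<approx> ins x m"
proof -
  have "s \<in> perms c"
    using assms(1) shifts_subset_perms[OF m_perm] by blast
  then have "ins x s \<in> perms (c + 1)" "length s = c"
    using ins_in_perms assms(2,3) by (auto simp: perms_def)
  from Kequiv_replace_window[OF this(1) ins_in_perms[OF m_perm assms(2,3)],
      of "[x]" "map (bump x) s" "[]" "map (bump x) m"]
  show ?thesis
    using assms(1) \<open>length s = c\<close> length_m m_in_shifts std_map_bump_shift
    by (simp add: ins_eq)
qed

lemma ins_last_shift_Kequiv:
  assumes "s \<in> shifts m" "1 \<le> y" "y \<le> c + 1"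
  shows "ins_last y s \<approx> ins_last y m"
proof -
  have "s \<in> perms c"
    using assms(1) shifts_subset_perms[OF m_perm] by blast
  then have "ins_last y s \<in> perms (c + 1)" "length s = c"
    using ins_last_in_perms assms(2,3) by (auto simp: perms_def)
  from Kequiv_replace_window[OF this(1) ins_last_in_perms[OF m_perm assms(2,3)],
      of "[]" "map (bump y) s" "[y]" "map (bump y) m"]
  show ?thesis
    using assms(1) \<open>length s = c\<close> length_m m_in_shifts std_map_bump_shift
    by (simp add: ins_last_def)
qed

lemma ins_Kequiv_ins_last:
  assumes "1 \<le> e" "e \<le> c" "{x, y} = {e, e + 1}" "x \<noteq> y"
  shows "ins x m \<approx> ins_last y m"
proof -
  have "e \<in> set m"
    using m_perm assms(1,2) by (simp add: perms_def)
  then obtain i where i: "i < c" "m ! i = e"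
    using length_m by (auto simp: in_set_conv_nth)
  define t where "t = tl (rotate i m)"
  have "m \<noteq> []"
    using length_m c_pos by auto
  then have "rotate i m \<noteq> []" "hd (rotate i m) = e"
    using i length_m by (simp_all add: hd_rotate_conv_nth)
  then have rotate_i: "rotate i m = e # t"
    unfolding t_def by (metis list.collapse)
  then have rotate_Suc_i: "rotate (Suc i) m = t @ [e]"
    by (simp add: rotate1_rotate_swap[symmetric])
  have "e \<notin> set t"
    using rotate_in_perms[OF m_perm, of i] rotate_i by (simp add: perms_def)
  have bounds: "1 \<le> x" "x \<le> c + 1" "1 \<le> y" "y \<le> c + 1"
    using assms by (auto simp: doubleton_eq_iff)
  have "ins x m \<approx> ins x (t @ [e])"
    using Kequiv_sym[OF ins_shift_Kequiv[OF rotate_m_in_shifts[of "Suc i"] bounds(1,2)]]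
    unfolding rotate_Suc_i .
  also have "ins x (t @ [e]) = ins_last y (e # t)"
    using ins_snoc_eq_ins_last[OF \<open>e \<notin> set t\<close> assms(3,4)] .
  also have "ins_last y (e # t) \<approx> ins_last y m"
    using ins_last_shift_Kequiv[OF rotate_m_in_shifts[of i] bounds(3,4)] unfolding rotate_i .
  finally show ?thesis .
qed

lemma ins_Kequiv_ins_minus_2:
  assumes "3 \<le> x" "x \<le> c + 1"
  shows "ins x m \<approx> ins (x - 2) m"
proof -
  have "ins x m \<approx> ins_last (x - 1) m"
    using assms by (intro ins_Kequiv_ins_last[of "x - 1"]) auto
  also have "ins_last (x - 1) m \<approx> ins (x - 2) m"
    by (rule Kequiv_sym[OF ins_Kequiv_ins_last[of "x - 2"]]) (use assms in auto)
  finally show ?thesis .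
qed

lemma ins_Kequiv_ins_1_or_2:
  "1 \<le> x \<Longrightarrow> x \<le> c + 1 \<Longrightarrow> ins x m \<approx> ins 1 m \<or> ins x m \<approx> ins 2 m"
proof (induction x rule: less_induct)
  case (less x)
  show ?case
  proof (cases "x \<le> 2")
    case True
    then have "x = 1 \<or> x = 2"
      using less.prems by auto
    then show ?thesis
      using Kequiv_refl ins_in_perms[OF m_perm] less.prems by auto
  next
    case False
    then have "ins x m \<approx> ins (x - 2) m"
      using less.prems by (intro ins_Kequiv_ins_minus_2) auto
    moreover have "ins (x - 2) m \<approx> ins 1 m \<or> ins (x - 2) m \<approx> ins 2 m"
      using less False by auto
    ultimately show ?thesis
      using Kequiv_trans by blast
  qed
qed

lemma ins_last_Kequiv_ins_1_or_2:
  assumes "1 \<le> y" "y \<le> c + 1"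
  shows "ins_last y m \<approx> ins 1 m \<or> ins_last y m \<approx> ins 2 m"
proof -
  obtain x where "1 \<le> x" "x \<le> c + 1" "ins_last y m \<approx> ins x m"
  proof (cases "y \<le> c")
    case True
    have "ins_last y m \<approx> ins (y + 1) m"
      by (rule Kequiv_sym[OF ins_Kequiv_ins_last[of y]]) (use assms True in auto)
    with True show ?thesis
      by (intro that[of "y + 1"]) simp_all
  next
    case False
    have "ins_last y m \<approx> ins (y - 1) m"
      by (rule Kequiv_sym[OF ins_Kequiv_ins_last[of "y - 1"]]) (use assms False c_pos in auto)
    with assms False c_pos show ?thesis
      by (intro that[of "y - 1"]) simp_all
  qed
  then show ?thesis
    using ins_Kequiv_ins_1_or_2 Kequiv_trans by blast
qed

lemma nonavoider_Kequiv_ins_or_ins_last: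
  assumes "w \<in> perms (c + 1)" "nonavoider m w"
  obtains x where "1 \<le> x" "x \<le> c + 1" "w \<approx> ins x m \<or> w \<approx> ins_last x m"
proof -
  obtain a u b where w: "w = a @ u @ b" "length u = c" "std u \<in> shifts m"
    using assms(2) length_m by (auto simp: nonavoider_def)
  have "length (a @ b) = 1"
    using w assms(1) by (simp add: perms_def)
  then obtain x where ab: "a @ b = [x]"
    by (metis One_nat_def length_0_conv length_Suc_conv)
  then have "x \<in> set w"
    using w(1) by (metis Un_iff list.set_intros(1) set_append)
  then have x: "1 \<le> x" "x \<le> c + 1"
    using assms(1) by (auto simp: perms_def)
  from ab consider "a = [x]" "b = []" | "a = []" "b = [x]"
    by (cases a) auto
  then show ?thesis
  proof cases
    case 1
    then have "w \<approx> ins x m"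
      using Kequiv_replace_window[OF assms(1) ins_in_perms[OF m_perm x],
          of "[x]" u "[]" "map (bump x) m"]
        w length_m m_in_shifts std_map_bump_shift by (simp add: ins_eq)
    then show ?thesis
      using that x by blast
  next
    case 2
    then have "w \<approx> ins_last x m"
      using Kequiv_replace_window[OF assms(1) ins_last_in_perms[OF m_perm x],
          of "[]" u "[x]" "map (bump x) m"]
        w length_m m_in_shifts std_map_bump_shift by (simp add: ins_last_def)
    then show ?thesis
      using that x by blast
  qed
qed

end

theorem lemma2p5:
  fixes c :: nat and m w :: "nat list"
  assumes "c > 1" and "m \<in> perms c"
    and "w \<in> perms (c + 1)" and "nonavoider m w"
  shows "Kequiv c (Kpart c m) (c + 1) w (ins 1 m) \<or> Kequiv c (Kpart c m) (c + 1) w (ins 2 m)"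
proof -
  interpret pattern_perm c m
    using assms(1,2) by unfold_locales simp_all
  obtain x where x: "1 \<le> x" "x \<le> c + 1" and "w \<approx> ins x m \<or> w \<approx> ins_last x m"
    using nonavoider_Kequiv_ins_or_ins_last[OF assms(3,4)] by blast
  then show ?thesis
    using ins_Kequiv_ins_1_or_2[OF x] ins_last_Kequiv_ins_1_or_2[OF x] Kequiv_trans by blast
qed

end
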